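(* Let $p$ be a prime and let $R$ be a local nearring which is not a nearfield, whose additive group is $G_3=\langle a\rangle+\langle b\rangle$ with $ap^2=0$, $bp=0$, $a+b=b+a$, and suppose $a$ is the identity element of $R$. Write $x=ax_1+bx_2$ ($0\le x_1<p^2$, $0\le x_2<p$) and define $\alpha\colon R\to\mathbb Z_{p^2}$, $\beta\colon R\to\mathbb Z_p$ by $xb=a\alpha(x)+b\beta(x)$. Then for $x=ax_1+bx_2$, $y=ay_1+by_2$, $$xy=a(x_1y_1+\alpha(x)y_2)+b(x_2y_1+\beta(x)y_2),$$ and moreover: (0) $\alpha(0)=\beta(0)=0$ if and only if $R$ is zero-symmetric; (1) $\alpha(a)=0$ and $\beta(a)=1$; (2) $\alpha(x)\equiv0\pmod p$; (3) $\alpha(xy)\equiv x_1\alpha(y)+\alpha(x)\beta(y)\pmod p$; (4) $\beta(xy)\equiv x_2\alpha(y)+\beta(x)\beta(y)\pmod p$.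
   Context: A (left) nearring is a set $R$ with operations $+,\cdot$ such that $(R,+)$ is a group with neutral element $0$, $(R,\cdot)$ a semigroup, and $x(y+z)=xy+xz$ for all $x,y,z$. A nearring with identity is local if its non-invertible elements form a subgroup of $(R,+)$; a nearfield is a nearring with identity in which every nonzero element is invertible. $R$ is zero-symmetric if $0\cdot x=0$ for all $x$. Additive notation: $gk$ is $g$ added $k$ times. *)

theory Defs
  imports "HOL-Computational_Algebra.Primes" "HOL-Number_Theory.Cong"
begin

fun addmult :: "'a::monoid_add \<Rightarrow> nat \<Rightarrow> 'a" where
  "addmult g 0 = 0"
| "addmult g (Suc k) = addmult g k + g"

definition left_nearring :: "'a::{group_add, semigroup_mult} itself \<Rightarrow> bool" where
  "left_nearring _ \<longleftrightarrow> (\<forall>x y z::'a. x * (y + z) = x * y + x * z)"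

definition nr_identity :: "'a::{group_add, semigroup_mult} \<Rightarrow> bool" where
  "nr_identity e \<longleftrightarrow> (\<forall>x. e * x = x \<and> x * e = x)"

definition nr_invertible :: "'a::{group_add, semigroup_mult} \<Rightarrow> 'a \<Rightarrow> bool" where
  "nr_invertible e x \<longleftrightarrow> (\<exists>y. x * y = e \<and> y * x = e)"

definition nr_local :: "'a::{group_add, semigroup_mult} \<Rightarrow> bool" where
  "nr_local e \<longleftrightarrow> nr_identity e \<and>
     (let N = {x. \<not> nr_invertible e x} in
        0 \<in> N \<and> (\<forall>x\<in>N. \<forall>y\<in>N. x + y \<in> N) \<and> (\<forall>x\<in>N. - x \<in> N))"

definition nearfield :: "'a::{group_add, semigroup_mult} \<Rightarrow> bool" where
  "nearfield e \<longleftrightarrow> nr_identity e \<and> (\<forall>x. x \<noteq> 0 \<longrightarrow> nr_invertible e x)"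

definition zero_symmetric :: "'a::{group_add, semigroup_mult} itself \<Rightarrow> bool" where
  "zero_symmetric _ \<longleftrightarrow> (\<forall>x::'a. 0 * x = 0)"

definition coords :: "nat \<Rightarrow> 'a::group_add \<Rightarrow> 'a \<Rightarrow> 'a \<Rightarrow> nat \<times> nat" where
  "coords p a b x = (THE c. fst c < p^2 \<and> snd c < p \<and> x = addmult a (fst c) + addmult b (snd c))"

definition alpha :: "nat \<Rightarrow> 'a::{group_add, semigroup_mult} \<Rightarrow> 'a \<Rightarrow> 'a \<Rightarrow> nat" where
  "alpha p a b x = fst (coords p a b (x * b))"

definition beta :: "nat \<Rightarrow> 'a::{group_add, semigroup_mult} \<Rightarrow> 'a \<Rightarrow> 'a \<Rightarrow> nat" where
  "beta p a b x = snd (coords p a b (x * b))"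

end

theory Submission
  imports Defs
begin

text \<open>Left distributivity and \<open>x * a = x\<close> give \<open>x * (a i + b j) = x i + (x b) j\<close>, so the whole
  multiplication is encoded by the coordinates \<open>(\<alpha>(x), \<beta>(x))\<close> of \<open>x b\<close>.  Associativity
  \<open>(x y) b = x (y b)\<close> compares the coordinates of both sides and yields (3) and (4), even modulo
  \<open>p\<^sup>2\<close> and \<open>p\<close>; and \<open>0 = x (b p) = (x b) p\<close> forces \<open>p \<alpha>(x) \<equiv> 0 (mod p\<^sup>2)\<close>, which is (2).\<close>

lemma addmult_add: "addmult (g::'a::monoid_add) (m + n) = addmult g m + addmult g n"
  by (induction n) (simp_all add: add.assoc)

lemma addmult_zero [simp]: "addmult (0::'a::monoid_add) n = 0"
  by (induction n) simp_all

lemma addmult_commute_right: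
  assumes "(g::'a::monoid_add) + h = h + g"
  shows "addmult g m + h = h + addmult g m"
proof (induction m)
  case (Suc m)
  have "addmult g m + g + h = addmult g m + h + g" using assms by (simp add: add.assoc)
  also have "\<dots> = h + (addmult g m + g)" using Suc by (simp add: add.assoc)
  finally show ?case by simp
qed simp

lemma addmult_commute:
  assumes "(g::'a::monoid_add) + h = h + g"
  shows "addmult g m + addmult h n = addmult h n + addmult g m"
proof -
  have "h + addmult g m = addmult g m + h" using addmult_commute_right[OF assms] by simp
  from addmult_commute_right[OF this, of n] show ?thesis by simp
qed

lemma addmult_mult: "addmult (g::'a::monoid_add) (m * n) = addmult (addmult g m) n"
proof (induction n)
  case (Suc n)
  then show ?case
    using addmult_commute_right[of "addmult g m" "addmult g m" n] by (simp add: addmult_add)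
qed simp

lemma addmult_mod:
  assumes "addmult (g::'a::monoid_add) m = 0"
  shows "addmult g n = addmult g (n mod m)"
proof -
  have "addmult g n = addmult g (n mod m) + addmult (addmult g m) (n div m)"
    by (metis addmult_add addmult_mult mod_mult_div_eq)
  with assms show ?thesis by simp
qed

lemma nearring_mult_zero_right:
  assumes "left_nearring TYPE('a::{group_add, semigroup_mult})"
  shows "(x::'a) * 0 = 0"
proof -
  have "x * 0 + x * 0 = 0 + x * 0"
    using assms unfolding left_nearring_def by (metis add_0 add.right_neutral)
  then show ?thesis by (simp only: add_right_cancel)
qed

lemma nearring_mult_addmult:
  assumes "left_nearring TYPE('a::{group_add, semigroup_mult})"
  shows "(x::'a) * addmult y n = addmult (x * y) n"
  by (induction n) (use assms nearring_mult_zero_right in \<open>auto simp: left_nearring_def\<close>)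

locale G3_nearring =
  fixes p :: nat and a b :: "'a::{group_add, semigroup_mult}"
  assumes left_nearring: "left_nearring TYPE('a)"
    and identity: "nr_identity a"
    and order_a: "addmult a (p^2) = 0" and order_b: "addmult b p = 0" and commute: "a + b = b + a"
    and basis: "bij_betw (\<lambda>(x1, x2). addmult a x1 + addmult b x2) ({..<p^2} \<times> {..<p}) UNIV"
begin

definition comb :: "nat \<Rightarrow> nat \<Rightarrow> 'a" where "comb i j = addmult a i + addmult b j"

lemma comb_add: "comb i j + comb k l = comb (i + k) (j + l)"
proof -
  have "comb i j + comb k l = addmult a i + (addmult b j + addmult a k) + addmult b l"
    by (simp add: comb_def add.assoc)
  also have "\<dots> = addmult a i + (addmult a k + addmult b j) + addmult b l"
    using addmult_commute[OF commute] by metis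
  also have "\<dots> = comb (i + k) (j + l)" by (simp add: comb_def add.assoc addmult_add)
  finally show ?thesis .
qed

lemma addmult_comb: "addmult (comb i j) n = comb (i * n) (j * n)"
  by (induction n) (simp_all add: comb_def[of 0 0] comb_add add.commute)

lemma comb_zero: "comb 0 0 = 0"
  by (simp add: comb_def)

lemma comb_mod: "comb i j = comb (i mod p^2) (j mod p)"
  unfolding comb_def using addmult_mod[OF order_a] addmult_mod[OF order_b] by metis

lemma p_pos: "0 < p"
  using basis by (auto simp: bij_betw_def)

lemma comb_eq_imp_cong:
  assumes "comb i j = comb k l"
  shows "[i = k] (mod p^2) \<and> [j = l] (mod p)"
proof -
  have "(\<lambda>(x1, x2). addmult a x1 + addmult b x2) (i mod p^2, j mod p)
      = (\<lambda>(x1, x2). addmult a x1 + addmult b x2) (k mod p^2, l mod p)"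
    using assms comb_mod unfolding comb_def by (metis case_prod_conv)
  moreover have "(i mod p^2, j mod p) \<in> {..<p^2} \<times> {..<p}" "(k mod p^2, l mod p) \<in> {..<p^2} \<times> {..<p}"
    using p_pos by auto
  ultimately have "(i mod p^2, j mod p) = (k mod p^2, l mod p)"
    using basis unfolding bij_betw_def by (blast dest: inj_onD)
  then show ?thesis unfolding cong_def by simp
qed

lemma coords_comb:
  assumes "i < p^2" "j < p"
  shows "coords p a b (comb i j) = (i, j)"
  unfolding coords_def
proof (rule the_equality)
  fix c assume c: "fst c < p^2 \<and> snd c < p \<and> comb i j = addmult a (fst c) + addmult b (snd c)"
  then have "comb i j = comb (fst c) (snd c)" by (simp add: comb_def)
  from comb_eq_imp_cong[OF this] have "i mod p^2 = fst c mod p^2" "j mod p = snd c mod p"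
    by (simp_all add: cong_def)
  with c assms show "c = (i, j)" by (cases c) simp
qed (use assms in \<open>simp add: comb_def\<close>)

lemma comb_coords: "comb (fst (coords p a b x)) (snd (coords p a b x)) = x"
proof -
  obtain i j where "i < p^2" "j < p" "x = comb i j"
    using basis unfolding bij_betw_def comb_def by force
  then show ?thesis using coords_comb by simp
qed

lemma mult_b_eq: "x * b = comb (alpha p a b x) (beta p a b x)"
  unfolding alpha_def beta_def by (rule comb_coords[symmetric])

lemma mult_comb_eq_addmult: "x * comb i j = addmult x i + addmult (x * b) j"
  using left_nearring identity
  by (simp add: comb_def left_nearring_def nr_identity_def nearring_mult_addmult)

lemma mult_comb:
  assumes "x = comb x1 x2"
  shows "x * comb i j = comb (x1 * i + alpha p a b x * j) (x2 * i + beta p a b x * j)"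
  unfolding mult_comb_eq_addmult mult_b_eq using assms
  by (simp add: addmult_comb comb_add mult.commute)

lemma alpha_beta_zero_iff_zero_symmetric:
  "alpha p a b 0 = 0 \<and> beta p a b 0 = 0 \<longleftrightarrow> zero_symmetric TYPE('a)"
proof
  assume "alpha p a b 0 = 0 \<and> beta p a b 0 = 0"
  then have "0 * b = 0" using mult_b_eq comb_zero by metis
  then have "0 * y = 0" for y :: 'a
    using mult_comb_eq_addmult comb_coords by (metis addmult_zero add_0)
  then show "zero_symmetric TYPE('a)" unfolding zero_symmetric_def by simp
next
  assume "zero_symmetric TYPE('a)"
  then have "0 * b = comb 0 0" unfolding zero_symmetric_def by (simp add: comb_zero)
  then show "alpha p a b 0 = 0 \<and> beta p a b 0 = 0"
    unfolding alpha_def beta_def using coords_comb p_pos by simp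
qed

lemma alpha_beta_identity:
  assumes "1 < p"
  shows "alpha p a b a = 0" "beta p a b a = 1"
proof -
  have "a * b = comb 0 1" using identity by (simp add: nr_identity_def comb_def)
  then show "alpha p a b a = 0" "beta p a b a = 1"
    unfolding alpha_def beta_def using coords_comb assms by simp_all
qed

lemma p_dvd_alpha: "p dvd alpha p a b x"
proof -
  have "comb (alpha p a b x * p) (beta p a b x * p) = x * addmult b p"
    by (simp add: mult_b_eq addmult_comb nearring_mult_addmult[OF left_nearring])
  also have "\<dots> = comb 0 0"
    by (simp add: order_b comb_zero nearring_mult_zero_right[OF left_nearring])
  finally have "[alpha p a b x * p = 0] (mod p^2)"
    using comb_eq_imp_cong by blast
  then have "p^2 dvd alpha p a b x * p" by (simp add: cong_0_iff)
  then show ?thesis using p_pos by (simp add: power2_eq_square)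
qed

lemma alpha_beta_mult_cong:
  "[alpha p a b (x * y) = fst (coords p a b x) * alpha p a b y + alpha p a b x * beta p a b y] (mod p^2)"
  "[beta p a b (x * y) = snd (coords p a b x) * alpha p a b y + beta p a b x * beta p a b y] (mod p)"
proof -
  have "comb (alpha p a b (x * y)) (beta p a b (x * y)) = x * (y * b)"
    by (simp add: mult_b_eq[symmetric] mult.assoc)
  also have "\<dots> = comb (fst (coords p a b x) * alpha p a b y + alpha p a b x * beta p a b y)
      (snd (coords p a b x) * alpha p a b y + beta p a b x * beta p a b y)"
    unfolding mult_b_eq[of y] by (rule mult_comb[OF comb_coords[symmetric]])
  finally show
    "[alpha p a b (x * y) = fst (coords p a b x) * alpha p a b y + alpha p a b x * beta p a b y] (mod p^2)"
    "[beta p a b (x * y) = snd (coords p a b x) * alpha p a b y + beta p a b x * beta p a b y] (mod p)"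
    using comb_eq_imp_cong by blast+
qed

end

theorem lemma9:
  fixes p :: nat and a b :: "'a::{group_add, semigroup_mult}"
  assumes "prime p"
    and "left_nearring TYPE('a)"
    and "nr_local a"
    and "\<not> nearfield a"
    and "addmult a (p^2) = 0" and "addmult b p = 0" and "a + b = b + a"
    and "bij_betw (\<lambda>(x1, x2). addmult a x1 + addmult b x2) ({..<p^2} \<times> {..<p}) (UNIV :: 'a set)"
  shows "(\<forall>x1 x2 y1 y2. x1 < p^2 \<longrightarrow> x2 < p \<longrightarrow> y1 < p^2 \<longrightarrow> y2 < p \<longrightarrow>
           (let x = addmult a x1 + addmult b x2; y = addmult a y1 + addmult b y2 in
             x * y = addmult a (x1 * y1 + alpha p a b x * y2)
                   + addmult b (x2 * y1 + beta p a b x * y2)))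
    \<and> ((alpha p a b 0 = 0 \<and> beta p a b 0 = 0) \<longleftrightarrow> zero_symmetric TYPE('a))
    \<and> alpha p a b a = 0 \<and> beta p a b a = 1
    \<and> (\<forall>x. p dvd alpha p a b x)
    \<and> (\<forall>x y. [alpha p a b (x * y) = fst (coords p a b x) * alpha p a b y + alpha p a b x * beta p a b y] (mod p))
    \<and> (\<forall>x y. [beta p a b (x * y) = snd (coords p a b x) * alpha p a b y + beta p a b x * beta p a b y] (mod p))"
proof -
  interpret G3_nearring p a b
    using assms by unfold_locales (auto simp: nr_local_def)
  have "1 < p" using assms(1) by (rule prime_gt_1_nat)
  have "[alpha p a b (x * y) = fst (coords p a b x) * alpha p a b y + alpha p a b x * beta p a b y] (mod p)"
    for x y
    using alpha_beta_mult_cong(1) by (rule cong_dvd_modulus_nat) simp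
  then show ?thesis
    using mult_comb[unfolded comb_def] alpha_beta_zero_iff_zero_symmetric
      alpha_beta_identity[OF \<open>1 < p\<close>] p_dvd_alpha alpha_beta_mult_cong(2)
    by (simp add: comb_def Let_def)
qed

end
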